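(* For every $\varepsilon>0$ there exist instances of Maximum Vertex Coverage in which the graph is bipartite and has a vertex cover of size $k$ (so the optimum covers all edges), but the greedy algorithm's output covers at most a $\left(1-\frac1e+\varepsilon\right)$ fraction of the edges.
   Context: Maximum Vertex Coverage: given a graph $G$ and a positive integer $k$, choose $k$ vertices so as to maximize the number of edges having at least one endpoint among the chosen vertices. (This is the special case of Maximum Coverage in which each element belongs to exactly two sets.) The greedy algorithm chooses $k$ vertices sequentially, each new vertex maximizing the number of edges it covers that are not yet covered by previously chosen vertices. *)

theory Defs
  imports Complex_Main
begin

definition simple_graph :: "'a set \<Rightarrow> 'a set set \<Rightarrow> bool" where
  "simple_graph V E \<longleftrightarrow> finite V \<and> (\<forall>e\<in>E. e \<subseteq> V \<and> card e = 2)"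

definition bipartite :: "'a set \<Rightarrow> 'a set set \<Rightarrow> bool" where
  "bipartite V E \<longleftrightarrow> (\<exists>A B. A \<union> B = V \<and> A \<inter> B = {} \<and>
      (\<forall>e\<in>E. card (e \<inter> A) = 1 \<and> card (e \<inter> B) = 1))"

definition covered :: "'a set set \<Rightarrow> 'a set \<Rightarrow> 'a set set" where
  "covered E S = {e \<in> E. e \<inter> S \<noteq> {}}"

definition vertex_cover :: "'a set set \<Rightarrow> 'a set \<Rightarrow> bool" where
  "vertex_cover E C \<longleftrightarrow> covered E C = E"

definition gain :: "'a set set \<Rightarrow> 'a set \<Rightarrow> 'a \<Rightarrow> nat" where
  "gain E S v = card (covered E (insert v S)) - card (covered E S)"

text \<open>vs is a possible run of the greedy algorithm (any tie-breaking):
  each chosen vertex is a new vertex maximizing the number of newly covered edges.\<close>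
definition greedy_run :: "'a set \<Rightarrow> 'a set set \<Rightarrow> 'a list \<Rightarrow> bool" where
  "greedy_run V E vs \<longleftrightarrow> distinct vs \<and> set vs \<subseteq> V \<and>
     (\<forall>i < length vs. \<forall>u \<in> V - set (take i vs).
        gain E (set (take i vs)) u \<le> gain E (set (take i vs)) (vs ! i))"

end

theory Submission imports Defs "HOL-Library.Nat_Bijection" begin

(* Fix D, R \<le> D and K divisible by D+1, D, ..., D+2-R.  Take K "centres" c_j,
   each of degree D: its x-th edge (x < R) goes to the hub of level x owning the
   block of D+1-x consecutive centres containing j, and its remaining D-R edges
   go to private leaves.  The K centres form a vertex cover, so the optimum
   covers all K*D edges, and the graph is bipartite (centres / rest).
   Hubs of level p have degree D+1-p.  As long as greedy has chosen only hubs
   and some hub is left, let p0 be the least level with an unchosen hub: that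
   hub gains D+1-p0, while a centre gains at most D-p0 and a leaf at most 1.
   If there are at least K hubs, greedy therefore chooses only hubs, which
   cover at most K*R edges.  Since the number of hubs is K*\<Sum>_{p<R} 1/(D+1-p)
   \<ge> K*ln((D+2)/(D+2-R)), the choice R \<approx> (1-1/e)(D+2) suffices, giving the
   ratio R/D \<le> 1-1/e+\<epsilon> for D large. *)

lemma gain_eq_uncovered_at:
  assumes "finite E"
  shows "gain E S u = card {e\<in>E. u \<in> e \<and> e \<inter> S = {}}"
proof -
  have "covered E (insert u S) = covered E S \<union> {e\<in>E. u \<in> e \<and> e \<inter> S = {}}"
    unfolding covered_def by auto
  moreover have "covered E S \<inter> {e\<in>E. u \<in> e \<and> e \<inter> S = {}} = {}"
    unfolding covered_def by auto
  moreover have "finite (covered E S)" using assms unfolding covered_def by simp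
  ultimately show ?thesis unfolding gain_def using assms by (simp add: card_Un_disjoint)
qed

lemma div_less_div_dvd: "(L::nat) dvd K \<Longrightarrow> 0 < L \<Longrightarrow> j < K \<Longrightarrow> j div L < K div L"
  by (metis dvd_div_mult_self less_mult_imp_div_less)

definition ctr :: "nat \<Rightarrow> nat" where "ctr j = 3 * j"
definition hub :: "nat \<Rightarrow> nat \<Rightarrow> nat" where "hub p i = 3 * prod_encode (p, i) + 1"
definition leaf :: "nat \<Rightarrow> nat \<Rightarrow> nat" where "leaf j l = 3 * prod_encode (j, l) + 2"

lemma vertex_kinds_distinct[simp]:
  "ctr j \<noteq> hub p i" "hub p i \<noteq> ctr j" "ctr j \<noteq> leaf p i" "leaf p i \<noteq> ctr j"
  "hub q i \<noteq> leaf p l" "leaf p l \<noteq> hub q i"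
  unfolding ctr_def hub_def leaf_def by presburger+

lemma vertex_encoding_inj[simp]:
  "ctr j = ctr j' \<longleftrightarrow> j = j'"
  "hub p i = hub p' i' \<longleftrightarrow> p = p' \<and> i = i'"
  "leaf j l = leaf j' l' \<longleftrightarrow> j = j' \<and> l = l'"
  unfolding ctr_def hub_def leaf_def by simp_all

definition nbr :: "nat \<Rightarrow> nat \<Rightarrow> nat \<Rightarrow> nat \<Rightarrow> nat" where
  "nbr D R j x = (if x < R then hub x (j div (D+1-x)) else leaf j (x-R))"

definition edge :: "nat \<Rightarrow> nat \<Rightarrow> nat \<Rightarrow> nat \<Rightarrow> nat set" where
  "edge D R j x = {ctr j, nbr D R j x}"

lemma nbr_ne_ctr[simp]: "nbr D R j x \<noteq> ctr j'" "ctr j' \<noteq> nbr D R j x"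
  unfolding nbr_def by auto

lemma card_edge[simp]: "card (edge D R j x) = 2"
  unfolding edge_def by simp

lemma edge_inj: "edge D R j x = edge D R j' x' \<Longrightarrow> j = j' \<and> x = x'"
proof -
  assume eq: "edge D R j x = edge D R j' x'"
  hence j: "j = j'" unfolding edge_def by (metis doubleton_eq_iff nbr_ne_ctr(1) vertex_encoding_inj(1))
  hence "nbr D R j x = nbr D R j x'" using eq unfolding edge_def by (metis doubleton_eq_iff)
  hence "x = x'" unfolding nbr_def by (auto split: if_splits)
  with j show ?thesis by simp
qed

definition Edges :: "nat \<Rightarrow> nat \<Rightarrow> nat \<Rightarrow> nat set set" where
  "Edges D R K = (\<lambda>(j,x). edge D R j x) ` ({..<K} \<times> {..<D})"
definition Centres :: "nat \<Rightarrow> nat set" where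
  "Centres K = ctr ` {..<K}"
definition Hubs :: "nat \<Rightarrow> nat \<Rightarrow> nat \<Rightarrow> nat set" where
  "Hubs D R K = (\<lambda>(p,i). hub p i) ` (SIGMA p:{..<R}. {..<K div (D+1-p)})"
definition Leaves :: "nat \<Rightarrow> nat \<Rightarrow> nat \<Rightarrow> nat set" where
  "Leaves D R K = (\<lambda>(j,l). leaf j l) ` ({..<K} \<times> {..<D-R})"
definition Verts :: "nat \<Rightarrow> nat \<Rightarrow> nat \<Rightarrow> nat set" where
  "Verts D R K = Centres K \<union> Hubs D R K \<union> Leaves D R K"

lemma finite_Edges[simp]: "finite (Edges D R K)"
  unfolding Edges_def by simp

lemma card_Edges: "card (Edges D R K) = K * D"
proof -
  have "inj_on (\<lambda>(j,x). edge D R j x) ({..<K} \<times> {..<D})"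
    by (auto simp: inj_on_def dest: edge_inj)
  thus ?thesis unfolding Edges_def by (simp add: card_image card_cartesian_product)
qed

lemma card_Centres: "card (Centres K) = K"
  unfolding Centres_def by (simp add: card_image inj_on_def)

lemma card_Hubs: "card (Hubs D R K) = (\<Sum>p<R. K div (D+1-p))"
proof -
  have "inj_on (\<lambda>(p,i). hub p i) (SIGMA p:{..<R}. {..<K div (D+1-p)})"
    by (auto simp: inj_on_def)
  thus ?thesis unfolding Hubs_def by (simp add: card_image)
qed

locale tight_instance =
  fixes D R K :: nat
  assumes R_le_D: "R \<le> D"
    and block_dvd: "\<And>p. p < R \<Longrightarrow> (D+1-p) dvd K"
    and enough_hubs: "K \<le> card (Hubs D R K)"
begin

abbreviation "E \<equiv> Edges D R K"
abbreviation "V \<equiv> Verts D R K"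
abbreviation "H \<equiv> Hubs D R K"

lemma block_index_less: "x < R \<Longrightarrow> j < K \<Longrightarrow> j div (D+1-x) < K div (D+1-x)"
  using div_less_div_dvd[OF block_dvd] R_le_D by simp

lemma nbr_in_Verts: "j < K \<Longrightarrow> x < D \<Longrightarrow> nbr D R j x \<in> V"
  using block_index_less
  by (cases "x < R") (force simp: nbr_def Verts_def Hubs_def Leaves_def)+

lemma edge_subset_Verts: "e \<in> E \<Longrightarrow> e \<subseteq> V"
  using nbr_in_Verts by (auto simp: Edges_def edge_def Verts_def Centres_def)

lemma simple_graph_instance: "simple_graph V E"
  using edge_subset_Verts
  by (auto simp: simple_graph_def Edges_def Verts_def Centres_def Hubs_def Leaves_def)

lemma Centres_cover: "vertex_cover E (Centres K)"
  by (auto simp: vertex_cover_def covered_def Edges_def edge_def Centres_def)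

lemma Centres_subset_Verts: "Centres K \<subseteq> V"
  unfolding Verts_def by auto

lemma bipartite_instance: "bipartite V E"
  \<comment> \<open>every edge has exactly one endpoint among the centres\<close>
proof -
  have "card (e \<inter> Centres K) = 1 \<and> card (e \<inter> (V - Centres K)) = 1" if "e \<in> E" for e
  proof -
    obtain j x where e: "e = edge D R j x" "j < K" "x < D"
      using \<open>e \<in> E\<close> unfolding Edges_def by auto
    have "nbr D R j x \<notin> Centres K" unfolding Centres_def by auto
    hence "e \<inter> Centres K = {ctr j}" "e \<inter> (V - Centres K) = {nbr D R j x}"
      using e nbr_in_Verts[OF e(2,3)] unfolding edge_def Centres_def by auto
    thus ?thesis by simp
  qed
  moreover have "Centres K \<union> (V - Centres K) = V" using Centres_subset_Verts by blast
  ultimately show ?thesis unfolding bipartite_def by blast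
qed

lemma gain_hub:
  assumes S: "S \<subseteq> H" and p: "p < R" and i: "i < K div (D+1-p)" and new: "hub p i \<notin> S"
  shows "D + 1 - p \<le> gain E S (hub p i)"
  \<comment> \<open>an unchosen hub of level p still has all of its D+1-p edges uncovered\<close>
proof -
  let ?L = "D+1-p"
  let ?block = "{i*?L..<i*?L+?L}"
  have "Suc i * ?L \<le> K div ?L * ?L" using i by (intro mult_right_mono) simp_all
  hence block_le_K: "i * ?L + ?L \<le> K" using block_dvd[OF p] by simp
  have uncovered: "(\<lambda>j. edge D R j p) ` ?block \<subseteq> {e\<in>E. hub p i \<in> e \<and> e \<inter> S = {}}"
  proof
    fix e assume "e \<in> (\<lambda>j. edge D R j p) ` ?block"
    then obtain j where j: "i*?L \<le> j" "j < i*?L+?L" and e: "e = edge D R j p" by auto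
    have "j < K" "p < D" using j block_le_K p R_le_D by simp_all
    hence "e \<in> E" unfolding e Edges_def by (intro image_eqI[of _ _ "(j,p)"]) auto
    moreover have "j div ?L = i" using j by (simp add: div_nat_eqI mult.commute)
    hence "nbr D R j p = hub p i" using p by (simp add: nbr_def)
    ultimately show "e \<in> {e\<in>E. hub p i \<in> e \<and> e \<inter> S = {}}"
      unfolding e edge_def using S new by (auto simp: Hubs_def)
  qed
  have "inj_on (\<lambda>j. edge D R j p) ?block"
    by (auto simp: inj_on_def dest: edge_inj)
  hence "card ?block = card ((\<lambda>j. edge D R j p) ` ?block)" by (simp add: card_image)
  also have "\<dots> \<le> card {e\<in>E. hub p i \<in> e \<and> e \<inter> S = {}}"
    by (rule card_mono[OF _ uncovered]) simp
  finally have "card ?block \<le> card {e\<in>E. hub p i \<in> e \<and> e \<inter> S = {}}" .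
  thus ?thesis by (simp add: gain_eq_uncovered_at)
qed

lemma gain_ctr:
  assumes lower_done: "\<forall>x<p0. \<forall>i<K div (D+1-x). hub x i \<in> S" and p0: "p0 < R" and j: "j < K"
  shows "gain E S (ctr j) \<le> D - p0"
  \<comment> \<open>if all hubs below level p0 are chosen, a centre keeps at most its D-p0 top edges\<close>
proof -
  have "{e\<in>E. ctr j \<in> e \<and> e \<inter> S = {}} \<subseteq> (\<lambda>x. edge D R j x) ` {p0..<D}"
  proof
    fix e assume e_unc: "e \<in> {e\<in>E. ctr j \<in> e \<and> e \<inter> S = {}}"
    then obtain x where e: "e = edge D R j x" "x < D"
      unfolding Edges_def edge_def by (auto simp: doubleton_eq_iff)
    have "\<not> x < p0"
    proof
      assume "x < p0"
      hence "hub x (j div (D+1-x)) \<in> S \<inter> e"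
        using lower_done block_index_less[OF _ j] p0 e by (auto simp: edge_def nbr_def)
      thus False using e_unc by blast
    qed
    thus "e \<in> (\<lambda>x. edge D R j x) ` {p0..<D}" using e by auto
  qed
  hence "card {e\<in>E. ctr j \<in> e \<and> e \<inter> S = {}} \<le> card {p0..<D}"
    by (meson card_image_le card_mono finite_atLeastLessThan finite_imageI order_trans)
  thus ?thesis by (simp add: gain_eq_uncovered_at)
qed

lemma gain_leaf: "gain E S (leaf j l) \<le> 1"
  \<comment> \<open>a leaf has degree one\<close>
proof -
  have "{e\<in>E. leaf j l \<in> e \<and> e \<inter> S = {}} \<subseteq> {edge D R j (R+l)}"
  proof
    fix e assume "e \<in> {e\<in>E. leaf j l \<in> e \<and> e \<inter> S = {}}"
    then obtain j' x where e: "e = edge D R j' x" and "nbr D R j' x = leaf j l"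
      unfolding Edges_def edge_def by auto
    hence "x = R + l" "j' = j" by (auto simp: nbr_def split: if_splits)
    thus "e \<in> {edge D R j (R+l)}" using e by simp
  qed
  hence "card {e\<in>E. leaf j l \<in> e \<and> e \<inter> S = {}} \<le> 1"
    using card_mono[of "{edge D R j (R+l)}"] by simp
  thus ?thesis by (simp add: gain_eq_uncovered_at)
qed

lemma least_open_level:
  assumes "S \<subseteq> H" "card S < card H"
  obtains p0 i0 where "p0 < R" "i0 < K div (D+1-p0)" "hub p0 i0 \<notin> S"
    "\<forall>x<p0. \<forall>i<K div (D+1-x). hub x i \<in> S"
proof -
  let ?open = "\<lambda>p. p < R \<and> (\<exists>i. i < K div (D+1-p) \<and> hub p i \<notin> S)"
  have "H - S \<noteq> {}" using assms by (metis Diff_eq_empty_iff less_irrefl subset_antisym)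
  hence "\<exists>p. ?open p" unfolding Hubs_def by auto
  then obtain p0 where "?open p0" "\<forall>m<p0. \<not> ?open m"
    using exists_least_iff[of ?open] by blast
  thus ?thesis using that by (meson order.strict_trans not_less)
qed

lemma greedy_choice_is_hub:
  assumes S: "S \<subseteq> H" "card S < card H" and u: "u \<in> V"
    and best: "\<forall>w\<in>V - S. gain E S w \<le> gain E S u"
  shows "u \<in> H"
proof (rule ccontr)
  assume u_not_hub: "u \<notin> H"
  obtain p0 i0 where P: "p0 < R" "i0 < K div (D+1-p0)" "hub p0 i0 \<notin> S"
    "\<forall>x<p0. \<forall>i<K div (D+1-x). hub x i \<in> S"
    using least_open_level[OF S] by blast
  have "hub p0 i0 \<in> V - S" using P by (force simp: Verts_def Hubs_def)
  hence "D + 1 - p0 \<le> gain E S u"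
    using gain_hub[OF S(1) P(1-3)] best le_trans by blast
  moreover have "gain E S u \<le> D - p0"
  proof -
    have "u \<in> Centres K \<or> u \<in> Leaves D R K" using u u_not_hub unfolding Verts_def by blast
    then show ?thesis
    proof
      assume "u \<in> Centres K"
      then obtain j where "j < K" "u = ctr j" unfolding Centres_def by auto
      thus ?thesis using gain_ctr[OF P(4) P(1)] by simp
    next
      assume "u \<in> Leaves D R K"
      then obtain j l where "u = leaf j l" unfolding Leaves_def by auto
      thus ?thesis using gain_leaf[of S j l] P(1) R_le_D by simp
    qed
  qed
  ultimately show False using P(1) R_le_D by simp
qed

lemma greedy_run_chooses_hubs:
  assumes g: "greedy_run V E vs" and len: "length vs \<le> K"
  shows "set vs \<subseteq> H"
proof -
  have "set (take i vs) \<subseteq> H" if "i \<le> length vs" for i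
    using that
  proof (induction i)
    case (Suc i)
    let ?S = "set (take i vs)"
    have IH: "?S \<subseteq> H" using Suc by simp
    have "card ?S < card H"
      using g Suc.prems len enough_hubs by (simp add: greedy_run_def distinct_card)
    moreover have "vs ! i \<in> V" "\<forall>w\<in>V - ?S. gain E ?S w \<le> gain E ?S (vs ! i)"
      using g Suc.prems by (auto simp: greedy_run_def)
    ultimately have "vs ! i \<in> H" using greedy_choice_is_hub IH by blast
    thus ?case using IH Suc.prems by (simp add: take_Suc_conv_app_nth)
  qed simp
  thus ?thesis by (metis order_refl take_all)
qed

lemma hubs_cover_few: "S \<subseteq> H \<Longrightarrow> card (covered E S) \<le> K * R"
  \<comment> \<open>hubs only meet the edges of the R lowest positions\<close>
proof -
  assume S: "S \<subseteq> H"
  have "covered E S \<subseteq> (\<lambda>(j,x). edge D R j x) ` ({..<K} \<times> {..<R})"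
  proof
    fix e assume "e \<in> covered E S"
    then obtain j x where e: "e = edge D R j x" "j < K" "x < D" and "e \<inter> S \<noteq> {}"
      unfolding covered_def Edges_def by auto
    hence "x < R" using S by (auto simp: edge_def nbr_def Hubs_def split: if_splits)
    thus "e \<in> (\<lambda>(j,x). edge D R j x) ` ({..<K} \<times> {..<R})" using e by force
  qed
  hence "card (covered E S) \<le> card ({..<K} \<times> {..<R})"
    by (meson card_image_le card_mono finite_SigmaI finite_imageI finite_lessThan order_trans)
  thus ?thesis by (simp add: card_cartesian_product)
qed

end

lemma ln_ratio_le_harmonic:
  "R \<le> D+1 \<Longrightarrow> ln (real D + 2) - ln (real D + 2 - real R) \<le> (\<Sum>p<R. 1 / real (D+1-p))"
  \<comment> \<open>telescoping the bound ln(m+1) - ln m \<le> 1/m\<close>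
proof (induction R)
  case (Suc R)
  define m where "m = real D + 1 - real R"
  have m1: "1 \<le> m" and m: "real (D+1-R) = m" using Suc.prems unfolding m_def by auto
  have "ln (m+1) - ln m = ln ((m+1)/m)" using m1 by (simp add: ln_div)
  also have "\<dots> \<le> (m+1)/m - 1" using m1 by (intro ln_le_minus_one) simp
  also have "\<dots> = 1/m" using m1 by (simp add: field_simps)
  finally have step: "ln (m+1) - ln m \<le> 1/m" .
  have "ln (real D + 2) - ln (real D + 2 - real R) \<le> (\<Sum>p<R. 1 / real (D+1-p))"
    using Suc by simp
  moreover have "real D + 2 - real R = m + 1" unfolding m_def by simp
  ultimately have IH: "ln (real D + 2) - ln (m+1) \<le> (\<Sum>p<R. 1 / real (D+1-p))"
    by (simp only:)
  have last: "real D + 2 - real (Suc R) = m" unfolding m_def by simp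
  have sum: "(\<Sum>p<Suc R. 1 / real (D+1-p)) = (\<Sum>p<R. 1 / real (D+1-p)) + 1/m"
    using m by simp
  show ?case unfolding last sum using step IH by linarith
qed simp

lemma enough_hubs_if_harmonic:
  assumes "\<And>p. p < R \<Longrightarrow> (D+1-p) dvd K" and "1 \<le> (\<Sum>p<R. 1 / real (D+1-p))"
  shows "K \<le> card (Hubs D R K)"
proof -
  have "real K \<le> real K * (\<Sum>p<R. 1 / real (D+1-p))"
    using mult_left_mono[OF assms(2), of "real K"] by simp
  also have "\<dots> = (\<Sum>p<R. real (K div (D+1-p)))"
    using assms(1) by (simp add: sum_distrib_left real_of_nat_div)
  also have "\<dots> = real (card (Hubs D R K))" by (simp add: card_Hubs)
  finally show ?thesis by simp
qed

lemma good_parameters: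
  assumes "\<epsilon> > 0"
  obtains D R K where "tight_instance D R K" "0 < K" "0 < D"
    "real R \<le> (1 - 1 / exp 1 + \<epsilon>) * real D"
proof -
  define c where "c = 1 - 1 / exp (1::real)"
  define D where "D = nat \<lceil>3/\<epsilon>\<rceil> + 10"
  define R where "R = nat \<lceil>(real D + 2) * c\<rceil>"
  define K :: nat where "K = fact (D+1)"
  have c_lo: "1/2 \<le> c" and c_hi: "c \<le> 2/3"
    using exp_ge_add_one_self[of 1] exp_le unfolding c_def by (simp_all add: field_simps)
  have D_lo: "3/\<epsilon> \<le> real D" "10 \<le> real D" unfolding D_def by linarith+
  have R_lo: "(real D + 2) * c \<le> real R" unfolding R_def by linarith
  have R_hi: "real R \<le> (real D + 2) * c + 1"
    unfolding R_def using c_lo by (simp add: of_nat_nat)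
  also have "\<dots> \<le> (real D + 2) * (2/3) + 1" using mult_left_mono[OF c_hi, of "real D + 2"] by simp
  also have "\<dots> \<le> real D" using D_lo(2) by (simp add: field_simps)
  finally have R_le_D: "R \<le> D" by simp
  have "3 \<le> \<epsilon> * real D" using D_lo \<open>\<epsilon> > 0\<close> by (simp add: field_simps)
  hence R_ratio: "real R \<le> (c + \<epsilon>) * real D" using R_hi c_hi by (simp add: algebra_simps)
  have dvd: "(D+1-p) dvd K" if "p < R" for p
    unfolding K_def using that R_le_D by (intro dvd_fact) auto
  have "ln (real D + 2 - real R) \<le> ln ((real D + 2) / exp 1)"
    using R_lo R_le_D unfolding c_def by (simp add: field_simps)
  hence "1 \<le> (\<Sum>p<R. 1 / real (D+1-p))"
    using ln_ratio_le_harmonic[of R D] R_le_D by (simp add: ln_div)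
  hence "tight_instance D R K"
    using R_le_D dvd enough_hubs_if_harmonic by unfold_locales auto
  moreover have "0 < K" "0 < D" unfolding K_def D_def by simp_all
  ultimately show ?thesis using R_ratio unfolding c_def by (rule that)
qed

theorem lemma5p1:
  fixes \<epsilon> :: real
  assumes "\<epsilon> > 0"
  shows "\<exists>(V :: nat set) E (k :: nat).
           simple_graph V E \<and> bipartite V E \<and> E \<noteq> {} \<and> k > 0 \<and>
           (\<exists>C \<subseteq> V. card C = k \<and> vertex_cover E C) \<and>
           (\<forall>vs. greedy_run V E vs \<and> length vs = k \<longrightarrow>
              real (card (covered E (set vs))) \<le> (1 - 1 / exp 1 + \<epsilon>) * real (card E))"
proof -
  obtain D R K where "tight_instance D R K" and K: "0 < K" and "0 < D"
    and ratio: "real R \<le> (1 - 1 / exp 1 + \<epsilon>) * real D"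
    using good_parameters[OF assms] by blast
  interpret tight_instance D R K by fact
  have "E \<noteq> {}" using card_Edges[of D R K] K \<open>0 < D\<close> by auto
  moreover have "real (card (covered E (set vs))) \<le> (1 - 1 / exp 1 + \<epsilon>) * real (card E)"
    if "greedy_run V E vs" "length vs = K" for vs
  proof -
    have "card (covered E (set vs)) \<le> K * R"
      using hubs_cover_few[OF greedy_run_chooses_hubs] that by simp
    hence "real (card (covered E (set vs))) \<le> real K * real R"
      by (metis of_nat_le_iff of_nat_mult)
    also have "\<dots> \<le> real K * ((1 - 1 / exp 1 + \<epsilon>) * real D)"
      using ratio by (simp add: mult_left_mono)
    finally show ?thesis by (simp add: card_Edges mult.left_commute)
  qed
  moreover have "\<exists>C \<subseteq> V. card C = K \<and> vertex_cover E C"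
    using Centres_subset_Verts card_Centres Centres_cover by blast
  ultimately show ?thesis using simple_graph_instance bipartite_instance K
    by (intro exI[of _ V] exI[of _ E] exI[of _ K]) simp
qed

end
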